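(* Let $V$ be a real sequence with $\liminf_{n\to\infty}V_n>C>0$, and let $G_{jk}=\psi^+_{\min(j,k)}\psi^-_{\max(j,k)}$ be a Green matrix for $(-\Delta+V)\psi=0$, where $\psi^-$ is a nonzero solution square-summable at infinity and $\psi^+$ is a solution with $\psi^-_n\psi^+_{n+1}-\psi^-_{n+1}\psi^+_n=1$. Define $$K_A:=\sqrt{1+\left(\frac{2}{C(C+2)}\right)^2}+\frac{2}{C(C+2)}.$$ Then for $n$ sufficiently large, $$\frac{1}{V_n+2}\le G_{nn}\le\frac{K_A}{V_n+2},$$ and consequently, with $z_n=\sqrt{G_{nn}}$ and $S^{[z]}_n=\frac{1+\sqrt{1+4z_n^2z_{n-1}^2}}{2z_nz_{n-1}}$, $$\frac{\sqrt{(V_n+2)(V_{n-1}+2)}+\sqrt{4+(V_n+2)(V_{n-1}+2)}}{2K_A}\le S^{[z]}_n\le\frac{\sqrt{(V_n+2)(V_{n-1}+2)}+\sqrt{4+(V_n+2)(V_{n-1}+2)}}{2}.$$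
   Context: $(\Delta f)_n=f_{n+1}+f_{n-1}-2f_n$; $(-\Delta+V)\psi=0$ means $-\psi_{n+1}-\psi_{n-1}+(2+V_n)\psi_n=0$. *)

theory Defs
  imports "HOL-Analysis.Analysis"
begin

text \<open>Solutions of (-Delta+V)psi=0 on the half-line indexed by nat:
  -psi(n+1) - psi(n-1) + (2 + V n) psi n = 0 for all n >= 1.\<close>
definition is_solution :: "(nat \<Rightarrow> real) \<Rightarrow> (nat \<Rightarrow> real) \<Rightarrow> bool" where
  "is_solution V psi \<longleftrightarrow>
     (\<forall>n\<ge>1. - psi (n + 1) - psi (n - 1) + (2 + V n) * psi n = 0)"

definition green :: "(nat \<Rightarrow> real) \<Rightarrow> (nat \<Rightarrow> real) \<Rightarrow> nat \<Rightarrow> nat \<Rightarrow> real" where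
  "green psip psim j k = psip (min j k) * psim (max j k)"

definition K_A :: "real \<Rightarrow> real" where
  "K_A C = sqrt (1 + (2 / (C * (C + 2)))^2) + 2 / (C * (C + 2))"

definition S_z :: "(nat \<Rightarrow> real) \<Rightarrow> nat \<Rightarrow> real" where
  "S_z z n = (1 + sqrt (1 + 4 * (z n)^2 * (z (n - 1))^2)) / (2 * z n * z (n - 1))"

end

theory Submission
  imports Defs
begin

text \<open>Write \<open>p = \<psi>\<^sup>-\<close>, \<open>q = \<psi>\<^sup>+\<close>, so that \<open>G\<^sub>n\<^sub>n = q\<^sub>n p\<^sub>n\<close>. Once \<open>V\<^sub>n > C > 0\<close>, a solution
  tending to \<open>0\<close> is eventually of constant sign and strictly decreasing in modulus, and the Riccati
  form \<open>p\<^sub>n/p\<^sub>n\<^sub>+\<^sub>1 + p\<^sub>n\<^sub>+\<^sub>2/p\<^sub>n\<^sub>+\<^sub>1 = 2 + V\<^sub>n\<^sub>+\<^sub>1\<close> of the equation bounds its ratio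
  \<open>r\<^sub>n = p\<^sub>n\<^sub>+\<^sub>1/p\<^sub>n\<close> by \<open>1/(1+C)\<close>. The Wronskian gives \<open>1/G\<^sub>n\<^sub>n = t\<^sub>n - r\<^sub>n\<close> with
  \<open>t\<^sub>n = q\<^sub>n\<^sub>+\<^sub>1/q\<^sub>n\<close>, and \<open>q/p\<close> increases by \<open>1/(p\<^sub>n p\<^sub>n\<^sub>+\<^sub>1) \<rightarrow> \<infinity>\<close>, so \<open>G\<^sub>n\<^sub>n > 0\<close>
  eventually. The ratio \<open>t\<^sub>n\<close> cannot stay \<open>\<le> 1\<close>: then \<open>q\<close> would be bounded and \<open>G\<^sub>n\<^sub>n \<rightarrow> 0\<close>,
  whereas \<open>1/G\<^sub>n\<^sub>n < 1\<close>. Once \<open>t\<^sub>n > 1\<close>, the Riccati equation keeps \<open>t\<^sub>n > 1 + C\<close>. Hence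
  \<open>1/G\<^sub>n\<^sub>n = V\<^sub>n + 2 - e\<^sub>n\<close> with \<open>0 < e\<^sub>n < 2/(1+C)\<close>, which yields the bounds on \<open>G\<^sub>n\<^sub>n\<close>; those
  on \<open>S\<^sup>[\<^sup>z\<^sup>]\<^sub>n\<close> follow since \<open>(1 + \<surd>(1 + 4w\<^sup>2))/(2w)\<close> is decreasing in \<open>w\<close>.\<close>

lemma tendsto_0_if_summable_power2:
  fixes f :: "nat \<Rightarrow> real"
  assumes "summable (\<lambda>n. (f n)\<^sup>2)"
  shows "f \<longlonglongrightarrow> 0"
proof -
  have "(\<lambda>n. sqrt ((f n)\<^sup>2)) \<longlonglongrightarrow> sqrt 0"
    using summable_LIMSEQ_zero[OF assms] by (rule tendsto_real_sqrt)
  then show ?thesis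
    by (simp add: tendsto_rabs_zero_iff)
qed

lemma eventually_sequentially_pred:
  assumes "\<forall>\<^sub>F n in sequentially. P n"
  shows "\<forall>\<^sub>F n in sequentially. P (n - 1)"
  using assms by (subst eventually_sequentially_Suc[symmetric]) simp

lemma abs_diff_eq_abs_add_abs:
  fixes a b :: real
  assumes "a * b \<le> 0"
  shows "\<bar>a - b\<bar> = \<bar>a\<bar> + \<bar>b\<bar>"
  using assms mult_le_0_iff by force

lemma filterlim_at_top_if_unit_increments:
  fixes f :: "nat \<Rightarrow> real"
  assumes "\<forall>\<^sub>F n in sequentially. f n + 1 \<le> f (Suc n)"
  shows "filterlim f at_top sequentially"
proof -
  obtain N where N: "\<forall>n\<ge>N. f n + 1 \<le> f (Suc n)"
    using assms by (auto simp: eventually_sequentially)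
  have lower: "f N - real N + real n \<le> f n" if "N \<le> n" for n
    using that
  proof (induction n rule: dec_induct)
    case (step n) with N show ?case by force
  qed simp
  have "filterlim (\<lambda>n. f N - real N + real n) at_top sequentially"
    by (rule filterlim_tendsto_add_at_top[OF tendsto_const filterlim_real_sequentially])
  then show ?thesis
    by (rule filterlim_at_top_mono) (use lower in \<open>auto simp: eventually_sequentially\<close>)
qed

definition ratio :: "(nat \<Rightarrow> real) \<Rightarrow> nat \<Rightarrow> real" where
  "ratio p n = p (Suc n) / p n"

lemma is_solution_Suc_Suc:
  assumes "is_solution V p"
  shows "p (Suc (Suc n)) = (2 + V (Suc n)) * p (Suc n) - p n"
  using assms[unfolded is_solution_def, rule_format, of "Suc n"] by simp

lemma ratio_Suc:
  assumes "is_solution V p" and "p (Suc n) \<noteq> 0"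
  shows "ratio p (Suc n) = 2 + V (Suc n) - inverse (ratio p n)"
  using is_solution_Suc_Suc[OF assms(1), of n] assms(2) by (simp add: ratio_def field_simps)

lemma is_solution_eq_0:
  assumes sol: "is_solution V p" and "p m = 0" "p (Suc m) = 0"
  shows "p k = 0"
proof -
  have up: "p k = 0 \<and> p (Suc k) = 0" if "m \<le> k" for k
    using that
  proof (induction k rule: dec_induct)
    case base then show ?case using assms by simp
  next
    case (step k) then show ?case using is_solution_Suc_Suc[OF sol, of k] by simp
  qed
  have down: "p k = 0 \<and> p (Suc k) = 0" if "k \<le> m" for k
    using that
  proof (induction k rule: inc_induct)
    case base then show ?case using assms by simp
  next
    case (step k)
    have "p k = (2 + V (Suc k)) * p (Suc k) - p (Suc (Suc k))"
      using is_solution_Suc_Suc[OF sol, of k] by simp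
    with step.IH show ?case by simp
  qed
  show ?thesis using up down by (meson nat_le_linear)
qed

lemma decaying_solution_abs_less:
  assumes sol: "is_solution V p" and lim: "p \<longlonglongrightarrow> 0" and V: "\<forall>n\<ge>N. 0 \<le> V n"
    and "N \<le> k" and nz: "p (Suc k) \<noteq> 0"
  shows "\<bar>p (Suc k)\<bar> < \<bar>p k\<bar>"
proof (rule ccontr)
  assume not_less: "\<not> ?thesis"
  have nondecreasing: "\<bar>p (Suc k)\<bar> \<le> \<bar>p (Suc n)\<bar> \<and> \<bar>p n\<bar> \<le> \<bar>p (Suc n)\<bar>" if "k \<le> n" for n
    using that
  proof (induction n rule: dec_induct)
    case base then show ?case using not_less by simp
  next
    case (step n)
    have "0 \<le> V (Suc n)" using V \<open>N \<le> k\<close> step.hyps by simp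
    then have "2 * \<bar>p (Suc n)\<bar> \<le> \<bar>(2 + V (Suc n)) * p (Suc n)\<bar>"
      by (simp add: abs_mult mult_right_mono)
    then show ?case using step.IH is_solution_Suc_Suc[OF sol, of n] by linarith
  qed
  have "(\<lambda>n. \<bar>p n\<bar>) \<longlonglongrightarrow> 0"
    using lim by (simp add: tendsto_rabs_zero_iff)
  then have "\<forall>\<^sub>F n in sequentially. \<bar>p n\<bar> < \<bar>p (Suc k)\<bar>"
    using nz by (intro order_tendstoD(2)) auto
  then have "\<forall>\<^sub>F n in sequentially. \<bar>p (Suc n)\<bar> < \<bar>p (Suc k)\<bar>"
    by (rule eventually_sequentially_Suc[THEN iffD2])
  moreover have "\<forall>\<^sub>F n in sequentially. k \<le> n"
    by (rule eventually_ge_at_top)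
  ultimately have "\<forall>\<^sub>F n in sequentially. False"
    by eventually_elim (use nondecreasing in fastforce)
  then show False by simp
qed

lemma decaying_solution_sign:
  assumes sol: "is_solution V p" and lim: "p \<longlonglongrightarrow> 0" and V: "\<forall>n\<ge>N. 0 \<le> V n"
    and "N \<le> m" and nz: "p m \<noteq> 0"
  shows "0 < p m * p (Suc m)"
proof (rule ccontr)
  assume "\<not> ?thesis"
  define a where "a = (2 + V (Suc m)) * p (Suc m)"
  have "0 \<le> V (Suc m)" using V \<open>N \<le> m\<close> by simp
  with \<open>\<not> ?thesis\<close> have "(2 + V (Suc m)) * (p m * p (Suc m)) \<le> 0"
    by (simp add: mult_nonneg_nonpos)
  then have "a * p m \<le> 0"
    by (simp add: a_def ac_simps)
  then have "\<bar>p (Suc (Suc m))\<bar> = \<bar>a\<bar> + \<bar>p m\<bar>"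
    using is_solution_Suc_Suc[OF sol, of m] abs_diff_eq_abs_add_abs by (simp add: a_def)
  moreover have "\<bar>p (Suc m)\<bar> \<le> \<bar>a\<bar>"
    using \<open>0 \<le> V (Suc m)\<close> mult_right_mono[of 1 "2 + V (Suc m)" "\<bar>p (Suc m)\<bar>"]
    by (simp add: a_def abs_mult)
  ultimately have "\<bar>p (Suc m)\<bar> < \<bar>p (Suc (Suc m))\<bar>"
    using nz by simp
  moreover have "\<bar>p (Suc (Suc m))\<bar> < \<bar>p (Suc m)\<bar>"
    using \<open>\<bar>p (Suc m)\<bar> < _\<close> \<open>N \<le> m\<close>
    by (intro decaying_solution_abs_less[OF sol lim V]) auto
  ultimately show False by simp
qed

lemma decaying_solution_eventually:
  assumes sol: "is_solution V p" and lim: "p \<longlonglongrightarrow> 0" and nontriv: "p \<noteq> (\<lambda>_. 0)"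
    and V: "\<forall>n\<ge>N. 0 \<le> V n"
  shows "\<forall>\<^sub>F n in sequentially. p n \<noteq> 0 \<and> 0 < p n * p (Suc n) \<and> \<bar>p (Suc n)\<bar> < \<bar>p n\<bar>"
proof -
  obtain m where "N \<le> m" "p m \<noteq> 0"
  proof (cases "p N = 0 \<and> p (Suc N) = 0")
    case True
    then have "p = (\<lambda>_. 0)" using is_solution_eq_0[OF sol] by blast
    with nontriv show ?thesis by simp
  next
    case False
    then show ?thesis using that le_SucI by blast
  qed
  have nz: "p n \<noteq> 0" if "m \<le> n" for n
    using that
  proof (induction n rule: dec_induct)
    case base show ?case by fact
  next
    case (step n)
    with decaying_solution_sign[OF sol lim V, of n] \<open>N \<le> m\<close> show ?case by auto
  qed
  show ?thesis
  proof (rule eventually_sequentiallyI[of m])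
    fix n assume "m \<le> n"
    with nz decaying_solution_sign[OF sol lim V, of n] decaying_solution_abs_less[OF sol lim V, of n]
      \<open>N \<le> m\<close> show "p n \<noteq> 0 \<and> 0 < p n * p (Suc n) \<and> \<bar>p (Suc n)\<bar> < \<bar>p n\<bar>"
      by auto
  qed
qed

lemma decaying_solution_ratio:
  assumes sol: "is_solution V p" and lim: "p \<longlonglongrightarrow> 0" and nontriv: "p \<noteq> (\<lambda>_. 0)"
    and "0 \<le> C" and V: "\<forall>\<^sub>F n in sequentially. C < V n"
  shows "\<forall>\<^sub>F n in sequentially. p n \<noteq> 0 \<and> 0 < ratio p n \<and> ratio p n * (1 + C) < 1"
proof -
  obtain N where "\<forall>n\<ge>N. C < V n"
    using V by (auto simp: eventually_sequentially)
  with \<open>0 \<le> C\<close> have "\<forall>n\<ge>N. 0 \<le> V n" by force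
  from decaying_solution_eventually[OF sol lim nontriv this]
  have dec: "\<forall>\<^sub>F n in sequentially. p n \<noteq> 0 \<and> 0 < ratio p n \<and> ratio p n < 1"
    by eventually_elim (auto simp: ratio_def zero_less_divide_iff zero_less_mult_iff abs_less_iff divide_less_eq)
  moreover have "\<forall>\<^sub>F n in sequentially. p (Suc n) \<noteq> 0 \<and> ratio p (Suc n) < 1"
    using dec by (rule eventually_sequentially_Suc[THEN iffD2, OF eventually_mono]) simp
  moreover have "\<forall>\<^sub>F n in sequentially. C < V (Suc n)"
    using V by (rule eventually_sequentially_Suc[THEN iffD2])
  ultimately show ?thesis
  proof eventually_elim
    case (elim n)
    then have "1 + C < inverse (ratio p n)"
      using ratio_Suc[OF sol, of n] by simp
    with elim show ?case
      by (simp add: field_simps)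
  qed
qed

lemma wronskian_quotient_diff:
  fixes p q :: "nat \<Rightarrow> real"
  assumes "p n * q (Suc n) - p (Suc n) * q n = 1" and "p n \<noteq> 0" and "p (Suc n) \<noteq> 0"
  shows "q (Suc n) / p (Suc n) - q n / p n = 1 / (p n * p (Suc n))"
  using assms by (simp add: field_simps)

lemma wronskian_ratio_diff:
  assumes "p n * q (Suc n) - p (Suc n) * q n = 1" and "p n \<noteq> 0" and "q n \<noteq> 0"
  shows "1 / (q n * p n) = ratio q n - ratio p n"
  using assms by (simp add: ratio_def field_simps)

lemma inverse_green_diag:
  assumes sol: "is_solution V q"
    and W: "p (Suc n) * q (Suc (Suc n)) - p (Suc (Suc n)) * q (Suc n) = 1"
    and "p (Suc n) \<noteq> 0" and "q (Suc n) \<noteq> 0"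
  shows "inverse (green q p (Suc n) (Suc n)) = V (Suc n) + 2 - (inverse (ratio q n) + ratio p (Suc n))"
proof -
  have "1 / (q (Suc n) * p (Suc n)) = ratio q (Suc n) - ratio p (Suc n)"
    using wronskian_ratio_diff[of p "Suc n" q, OF W assms(3,4)] .
  then show ?thesis
    using ratio_Suc[OF sol assms(4)] by (simp add: green_def inverse_eq_divide)
qed

lemma wronskian_product_eventually_pos:
  fixes p q :: "nat \<Rightarrow> real"
  assumes W: "\<forall>n. p n * q (Suc n) - p (Suc n) * q n = 1" and lim: "p \<longlonglongrightarrow> 0"
    and pos: "\<forall>\<^sub>F n in sequentially. 0 < p n * p (Suc n)"
  shows "\<forall>\<^sub>F n in sequentially. 0 < q n * p n"
proof -
  have "(\<lambda>n. p n * p (Suc n)) \<longlonglongrightarrow> 0 * 0"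
    by (intro tendsto_mult lim LIMSEQ_Suc)
  then have "\<forall>\<^sub>F n in sequentially. p n * p (Suc n) < 1"
    by (intro order_tendstoD(2)) auto
  with pos have "\<forall>\<^sub>F n in sequentially. q n / p n + 1 \<le> q (Suc n) / p (Suc n)"
  proof eventually_elim
    case (elim n)
    then have "p n \<noteq> 0" "p (Suc n) \<noteq> 0" "1 \<le> 1 / (p n * p (Suc n))"
      by auto
    with W wronskian_quotient_diff[of p n q] show ?case by simp
  qed
  then have "filterlim (\<lambda>n. q n / p n) at_top sequentially"
    by (rule filterlim_at_top_if_unit_increments)
  then have "\<forall>\<^sub>F n in sequentially. 0 < q n / p n"
    by (simp add: filterlim_at_top_dense)
  with pos show ?thesis
  proof eventually_elim
    case (elim n)
    then have "p n \<noteq> 0" by auto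
    then have "q n * p n = q n / p n * (p n)\<^sup>2" by (simp add: power2_eq_square)
    with elim \<open>p n \<noteq> 0\<close> show ?case by (metis zero_less_power2 mult_pos_pos)
  qed
qed

lemma abs_le_if_ratio_le_1:
  fixes q :: "nat \<Rightarrow> real"
  assumes ratio: "\<forall>n\<ge>N. 0 < ratio q n \<and> ratio q n \<le> 1" and "N \<le> n"
  shows "\<bar>q n\<bar> \<le> \<bar>q N\<bar>"
  using \<open>N \<le> n\<close>
proof (induction n rule: dec_induct)
  case (step n)
  with ratio have "0 < ratio q n" "ratio q n \<le> 1"
    by auto
  then have "q (Suc n) = ratio q n * q n"
    by (auto simp: ratio_def)
  then have "\<bar>q (Suc n)\<bar> = ratio q n * \<bar>q n\<bar>"
    using \<open>0 < ratio q n\<close> by (simp add: abs_mult)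
  also have "\<dots> \<le> \<bar>q n\<bar>"
    using \<open>0 < ratio q n\<close> \<open>ratio q n \<le> 1\<close> by (intro mult_left_le_one_le) auto
  finally show ?case
    using step.IH by simp
qed simp

lemma wronskian_frequently_ratio_gt_1:
  fixes p q :: "nat \<Rightarrow> real"
  assumes W: "\<forall>n. p n * q (Suc n) - p (Suc n) * q n = 1" and lim: "p \<longlonglongrightarrow> 0"
    and pos: "\<forall>\<^sub>F n in sequentially. 0 < q n * p n"
    and rp: "\<forall>\<^sub>F n in sequentially. 0 < ratio p n"
  shows "\<exists>\<^sub>F n in sequentially. 1 < ratio q n"
proof (rule ccontr)
  assume "\<not> ?thesis"
  then have "\<forall>\<^sub>F n in sequentially. ratio q n \<le> 1"
    by (simp add: not_frequently not_less)
  with pos rp have "\<forall>\<^sub>F n in sequentially. 0 < q n * p n \<and> 0 < ratio p n \<and> ratio q n \<le> 1"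
    by (intro eventually_conj)
  then obtain N where N: "\<forall>n\<ge>N. 0 < q n * p n \<and> 0 < ratio p n \<and> ratio q n \<le> 1"
    by (auto simp: eventually_sequentially)
  have big: "1 < q n * p n" and "0 < ratio q n" if "N \<le> n" for n
  proof -
    from N that have qp: "0 < q n * p n" and "0 < ratio p n" "ratio q n \<le> 1"
      by auto
    then have "p n \<noteq> 0" "q n \<noteq> 0"
      by auto
    then have "1 / (q n * p n) = ratio q n - ratio p n"
      using wronskian_ratio_diff W by blast
    moreover have "0 < 1 / (q n * p n)"
      using qp by simp
    ultimately have "0 < ratio q n" "1 / (q n * p n) < 1"
      using \<open>0 < ratio p n\<close> \<open>ratio q n \<le> 1\<close> by linarith+
    then show "0 < ratio q n" "1 < q n * p n"
      using qp by (simp_all add: divide_less_eq)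
  qed
  with N have bounded: "\<bar>q n\<bar> \<le> \<bar>q N\<bar>" if "N \<le> n" for n
    using abs_le_if_ratio_le_1[of N q n] that by auto
  have "(\<lambda>n. \<bar>q N\<bar> * \<bar>p n\<bar>) \<longlonglongrightarrow> 0"
    using lim by (intro tendsto_mult_right_zero) (simp add: tendsto_rabs_zero_iff)
  then have "\<forall>\<^sub>F n in sequentially. \<bar>q N\<bar> * \<bar>p n\<bar> < 1"
    by (rule order_tendstoD(2)) simp
  then obtain M where "\<forall>n\<ge>M. \<bar>q N\<bar> * \<bar>p n\<bar> < 1"
    by (auto simp: eventually_sequentially)
  then obtain n where n: "N \<le> n" "\<bar>q N\<bar> * \<bar>p n\<bar> < 1"
    using max.cobounded1 max.cobounded2 by blast
  have "q n * p n \<le> \<bar>q n\<bar> * \<bar>p n\<bar>"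
    by (simp add: abs_mult[symmetric])
  also have "\<dots> \<le> \<bar>q N\<bar> * \<bar>p n\<bar>"
    using bounded[OF n(1)] by (simp add: mult_right_mono)
  finally show False
    using n big[OF n(1)] by simp
qed

lemma solution_ratio_eventually_gt:
  assumes sol: "is_solution V q" and "0 \<le> C" and V: "\<forall>\<^sub>F n in sequentially. C < V n"
    and nz: "\<forall>\<^sub>F n in sequentially. q n \<noteq> 0" and freq: "\<exists>\<^sub>F n in sequentially. 1 < ratio q n"
  shows "\<forall>\<^sub>F n in sequentially. 1 + C < ratio q n"
proof -
  obtain N where N: "\<forall>n\<ge>N. C < V n \<and> q n \<noteq> 0"
    using eventually_conj[OF V nz] by (auto simp: eventually_sequentially)
  obtain M where "N \<le> M" "1 < ratio q M"
    using freq by (auto simp: frequently_sequentially)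
  have ratio_step: "1 + C < ratio q (Suc n)" if "N \<le> n" "1 < ratio q n" for n
  proof -
    have "inverse (ratio q n) < 1" using that by (simp add: inverse_less_1_iff)
    moreover have "C < V (Suc n)" "q (Suc n) \<noteq> 0" using N that by auto
    ultimately show ?thesis using ratio_Suc[OF sol, of n] by simp
  qed
  have gt_1: "1 < ratio q n" if "M \<le> n" for n
    using that
  proof (induction n rule: dec_induct)
    case (step n) with \<open>N \<le> M\<close> ratio_step[of n] \<open>0 \<le> C\<close> show ?case by force
  qed fact
  show ?thesis
  proof (rule eventually_sequentiallyI[of "Suc M"])
    fix n assume "Suc M \<le> n"
    then obtain m where "n = Suc m" "M \<le> m"
      by (cases n) auto
    with \<open>N \<le> M\<close> ratio_step[of m] gt_1[of m] show "1 + C < ratio q n"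
      by simp
  qed
qed

lemma K_A_ge: "1 + 2 / (C * (C + 2)) \<le> K_A C"
  unfolding K_A_def by simp

lemma one_le_K_A:
  assumes "0 < C"
  shows "1 \<le> K_A C"
proof -
  have "0 \<le> 2 / (C * (C + 2))"
    using assms by simp
  then show ?thesis
    using K_A_ge[of C] by linarith
qed

lemma inverse_diff_le_K_A:
  fixes a e C :: real
  assumes C: "0 < C" and a: "2 + C < a" and e: "0 < e" "e * (1 + C) < 2"
  shows "1 / a \<le> 1 / (a - e) \<and> 1 / (a - e) \<le> K_A C / a"
proof -
  define K where "K = K_A C"
  have K1: "1 \<le> K"
    using one_le_K_A[OF C] by (simp add: K_def)
  have "2 / (C * (C + 2)) \<le> K - 1"
    using K_A_ge[of C] by (simp add: K_def)
  then have "2 \<le> (K - 1) * (C * (C + 2))"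
    using C by (simp add: divide_le_eq)
  moreover have "0 \<le> (K - 1) * C"
    using K1 C by simp
  ultimately have KC: "2 * K \<le> (K - 1) * (2 + C) * (1 + C)"
    by (simp add: algebra_simps)
  have "K * e * (1 + C) \<le> 2 * K"
    using e K1 by simp
  also have "\<dots> \<le> (K - 1) * (2 + C) * (1 + C)"
    by (fact KC)
  also have "\<dots> \<le> (K - 1) * a * (1 + C)"
    using a K1 C by (intro mult_right_mono mult_left_mono) auto
  finally have "K * e \<le> (K - 1) * a"
    using C by (simp add: mult_le_cancel_right_pos)
  then have upper: "a \<le> K * (a - e)"
    by (simp add: algebra_simps)
  have "e \<le> e * (1 + C)"
    using e C by (simp add: distrib_left)
  then have "0 < a - e"
    using a e C by linarith
  with upper show ?thesis
    using a e by (simp add: K_def field_simps frac_le)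
qed

lemma add_sqrt_square_add_1_bounds:
  fixes y P K :: real
  assumes "0 \<le> y" and K: "1 \<le> K" and lower: "P / (4 * K\<^sup>2) \<le> y\<^sup>2" and upper: "y\<^sup>2 \<le> P / 4"
  shows "(sqrt P + sqrt (4 + P)) / (2 * K) \<le> y + sqrt (y\<^sup>2 + 1)
    \<and> y + sqrt (y\<^sup>2 + 1) \<le> (sqrt P + sqrt (4 + P)) / 2"
proof -
  have sqrt_div: "sqrt x / (2 * K) = sqrt (x / (4 * K\<^sup>2))" for x
    using K by (simp add: real_sqrt_divide real_sqrt_mult)
  have "sqrt P / (2 * K) \<le> y"
    unfolding sqrt_div using lower \<open>0 \<le> y\<close> by (simp add: real_le_lsqrt)
  moreover have "sqrt (4 + P) / (2 * K) \<le> sqrt (y\<^sup>2 + 1)"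
  proof -
    have "1 / K\<^sup>2 \<le> 1" using K by (simp add: one_le_power)
    moreover have "(4 + P) / (4 * K\<^sup>2) = 1 / K\<^sup>2 + P / (4 * K\<^sup>2)"
      using K by (simp add: field_simps)
    ultimately have "(4 + P) / (4 * K\<^sup>2) \<le> y\<^sup>2 + 1"
      using lower by linarith
    then show ?thesis
      unfolding sqrt_div by simp
  qed
  moreover have "y \<le> sqrt P / 2"
    using upper by (simp add: real_le_rsqrt real_sqrt_divide)
  moreover have "sqrt (y\<^sup>2 + 1) \<le> sqrt (4 + P) / 2"
  proof -
    have "sqrt (y\<^sup>2 + 1) \<le> sqrt ((4 + P) / 4)"
      using upper by simp
    then show ?thesis
      by (simp add: real_sqrt_divide)
  qed
  ultimately show ?thesis
    by (simp add: add_divide_distrib)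
qed

lemma S_z_bounds:
  fixes z :: "nat \<Rightarrow> real" and a b K :: real
  assumes K: "1 \<le> K" and "0 < a" "0 < b" and "0 \<le> z n" "0 \<le> z (n - 1)"
    and zn: "1 / a \<le> (z n)\<^sup>2" "(z n)\<^sup>2 \<le> K / a"
    and zm: "1 / b \<le> (z (n - 1))\<^sup>2" "(z (n - 1))\<^sup>2 \<le> K / b"
  shows "(sqrt (a * b) + sqrt (4 + a * b)) / (2 * K) \<le> S_z z n
    \<and> S_z z n \<le> (sqrt (a * b) + sqrt (4 + a * b)) / 2"
proof -
  define w where "w = z n * z (n - 1)"
  define y where "y = 1 / (2 * w)"
  have an: "1 \<le> a * (z n)\<^sup>2" "a * (z n)\<^sup>2 \<le> K"
    using zn \<open>0 < a\<close> by (simp_all add: divide_le_eq le_divide_eq mult.commute)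
  have bm: "1 \<le> b * (z (n - 1))\<^sup>2" "b * (z (n - 1))\<^sup>2 \<le> K"
    using zm \<open>0 < b\<close> by (simp_all add: divide_le_eq le_divide_eq mult.commute)
  have "z n \<noteq> 0" "z (n - 1) \<noteq> 0"
    using an bm by auto
  with \<open>0 \<le> z n\<close> \<open>0 \<le> z (n - 1)\<close> have "0 < w"
    by (simp add: w_def)
  have "S_z z n = y + sqrt (1 + 4 * w\<^sup>2) / (2 * w)"
    by (simp add: S_z_def y_def w_def add_divide_distrib power_mult_distrib mult.assoc)
  also have "sqrt (1 + 4 * w\<^sup>2) / (2 * w) = sqrt (y\<^sup>2 + 1)"
    using \<open>0 < w\<close> by (simp add: y_def real_sqrt_divide real_sqrt_mult field_simps power2_eq_square)
  finally have S: "S_z z n = y + sqrt (y\<^sup>2 + 1)" .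
  have "1 * 1 \<le> (a * (z n)\<^sup>2) * (b * (z (n - 1))\<^sup>2)"
    using an bm by (intro mult_mono) auto
  moreover have "(a * (z n)\<^sup>2) * (b * (z (n - 1))\<^sup>2) \<le> K * K"
    using an bm K by (intro mult_mono) auto
  ultimately have w2: "1 \<le> a * b * w\<^sup>2" "a * b * w\<^sup>2 \<le> K\<^sup>2"
    by (simp_all add: w_def power_mult_distrib power2_eq_square ac_simps)
  have y2: "y\<^sup>2 = 1 / (4 * w\<^sup>2)"
    by (simp add: y_def power_mult_distrib power2_eq_square)
  have "a * b / (4 * K\<^sup>2) \<le> y\<^sup>2" "y\<^sup>2 \<le> a * b / 4"
    using w2 \<open>0 < w\<close> K unfolding y2 by (simp_all add: field_simps)
  moreover have "0 \<le> y" using \<open>0 < w\<close> by (simp add: y_def)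
  ultimately show ?thesis
    unfolding S using add_sqrt_square_add_1_bounds K by blast
qed

lemma green_diag_bounds:
  fixes V psip psim :: "nat \<Rightarrow> real" and C :: real
  assumes C: "0 < C" and V: "\<forall>\<^sub>F n in sequentially. C < V n"
    and sol_m: "is_solution V psim" and nontriv: "psim \<noteq> (\<lambda>_. 0)" and lim: "psim \<longlonglongrightarrow> 0"
    and sol_p: "is_solution V psip"
    and W: "\<forall>n. psim n * psip (Suc n) - psim (Suc n) * psip n = 1"
  shows "\<forall>\<^sub>F n in sequentially.
    1 / (V n + 2) \<le> green psip psim n n \<and> green psip psim n n \<le> K_A C / (V n + 2)"
proof -
  have rm: "\<forall>\<^sub>F n in sequentially. psim n \<noteq> 0 \<and> 0 < ratio psim n \<and> ratio psim n * (1 + C) < 1"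
    using decaying_solution_ratio[OF sol_m lim nontriv _ V] C by simp
  then have "\<forall>\<^sub>F n in sequentially. 0 < psim n * psim (Suc n)"
    by eventually_elim (auto simp: ratio_def zero_less_divide_iff zero_less_mult_iff)
  then have pos: "\<forall>\<^sub>F n in sequentially. 0 < psip n * psim n"
    by (rule wronskian_product_eventually_pos[OF W lim])
  have "\<exists>\<^sub>F n in sequentially. 1 < ratio psip n"
    using rm by (intro wronskian_frequently_ratio_gt_1[OF W lim pos]) (auto elim: eventually_mono)
  then have rp: "\<forall>\<^sub>F n in sequentially. 1 + C < ratio psip n"
    using pos C by (intro solution_ratio_eventually_gt[OF sol_p _ V]) (auto elim: eventually_mono)
  have "\<forall>\<^sub>F n in sequentially. 1 / (V (Suc n) + 2) \<le> green psip psim (Suc n) (Suc n)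
      \<and> green psip psim (Suc n) (Suc n) \<le> K_A C / (V (Suc n) + 2)"
    using rp eventually_sequentially_Suc[THEN iffD2, OF rm]
      eventually_sequentially_Suc[THEN iffD2, OF pos] eventually_sequentially_Suc[THEN iffD2, OF V]
  proof eventually_elim
    case (elim n)
    define e where "e = inverse (ratio psip n) + ratio psim (Suc n)"
    have "0 < ratio psip n" "(1 + C) / ratio psip n < 1"
      using elim C by (simp_all add: divide_less_eq)
    moreover have "e * (1 + C) = (1 + C) / ratio psip n + ratio psim (Suc n) * (1 + C)"
      by (simp add: e_def algebra_simps divide_inverse)
    ultimately have "0 < e" "e * (1 + C) < 2"
      using elim e_def positive_imp_inverse_positive[of "ratio psip n"] by linarith+
    moreover have "2 + C < V (Suc n) + 2"
      using elim by simp
    moreover have "green psip psim (Suc n) (Suc n) = 1 / (V (Suc n) + 2 - e)"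
    proof -
      have "psim (Suc n) \<noteq> 0" "psip (Suc n) \<noteq> 0"
        using elim by auto
      then have "inverse (green psip psim (Suc n) (Suc n)) = V (Suc n) + 2 - e"
        using inverse_green_diag[OF sol_p W[rule_format, of "Suc n"]] by (simp add: e_def)
      then show ?thesis
        by (metis inverse_eq_divide inverse_inverse_eq)
    qed
    ultimately show ?case
      using inverse_diff_le_K_A[OF C, of "V (Suc n) + 2" e] by simp
  qed
  then show ?thesis
    by (rule eventually_sequentially_Suc[THEN iffD1])
qed

theorem lemma3:
  fixes V psip psim :: "nat \<Rightarrow> real" and C :: real
  assumes "C > 0"
    and "liminf (\<lambda>n. ereal (V n)) > ereal C"
    and "is_solution V psim" and "psim \<noteq> (\<lambda>_. 0)" and "summable (\<lambda>n. (psim n)^2)"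
    and "is_solution V psip"
    and "\<forall>n. psim n * psip (n + 1) - psim (n + 1) * psip n = 1"
  shows "\<forall>\<^sub>F n in sequentially.
      1 / (V n + 2) \<le> green psip psim n n \<and> green psip psim n n \<le> K_A C / (V n + 2)
    \<and> (let z = (\<lambda>m. sqrt (green psip psim m m));
           P = (V n + 2) * (V (n - 1) + 2)
       in (sqrt P + sqrt (4 + P)) / (2 * K_A C) \<le> S_z z n
          \<and> S_z z n \<le> (sqrt P + sqrt (4 + P)) / 2)"
proof -
  have V: "\<forall>\<^sub>F n in sequentially. C < V n"
    using less_LiminfD[OF assms(2)] by simp
  have "\<forall>\<^sub>F n in sequentially.
      1 / (V n + 2) \<le> green psip psim n n \<and> green psip psim n n \<le> K_A C / (V n + 2)"
    using green_diag_bounds[OF assms(1) V assms(3,4) tendsto_0_if_summable_power2[OF assms(5)] assms(6)]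
      assms(7) by simp
  with V have bounds: "\<forall>\<^sub>F n in sequentially. C < V n \<and> 1 / (V n + 2) \<le> green psip psim n n
      \<and> green psip psim n n \<le> K_A C / (V n + 2)"
    by (rule eventually_conj)
  from bounds eventually_sequentially_pred[OF bounds] show ?thesis
  proof eventually_elim
    case (elim n)
    then have "0 < 1 / (V n + 2)" "0 < 1 / (V (n - 1) + 2)"
      using assms(1) by simp_all
    with elim have "0 < green psip psim n n" "0 < green psip psim (n - 1) (n - 1)"
      by linarith+
    with elim show ?case
      using S_z_bounds[OF one_le_K_A[OF assms(1)], of "V n + 2" "V (n - 1) + 2"
          "\<lambda>m. sqrt (green psip psim m m)" n] assms(1)
      by (simp add: Let_def)
  qed
qed

end
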